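(* Let $H_1,H_2$ be graphs whose cores are both isomorphic to a graph $C$, and suppose there is a homomorphism from $H_1$ to $H_2$. Then the $C$-covering number of $H_1$ is at most the $C$-covering number of $H_2$.
   Context: A homomorphism $F\to F'$ is a vertex map sending edges to edges. A subgraph $C$ of $H$ is a core of $H$ if there is a homomorphism $H\to C$ but none from $H$ to a proper subgraph of $C$. A copy of $C$ in $F$ is a (not necessarily induced) subgraph of $F$ isomorphic to $C$. For a graph $F$ and a $c$-vertex graph $C$, a $C$-coloring of $F$ is a map $f:V(F)\to\{1,\dots,c\}$ such that the vertices of every copy of $C$ in $F$ receive pairwise distinct colors; $F$ is $C$-colorable if it has one. If $C$ is the core of $H$, a $C$-covering of $H$ of size $r$ is a collection $C_1,\dots,C_r\subseteq V(H)$ such that every copy of $C$ in $H$ lies in the subgraph induced by some $C_i$, and each induced subgraph $H[C_i]$ is $C$-colorable. The $C$-covering number of $H$ is the minimum size of a $C$-covering of $H$. *)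

theory Defs
  imports Main
begin

definition graph :: "'a set \<Rightarrow> 'a set set \<Rightarrow> bool" where
  "graph V E \<longleftrightarrow> finite V \<and> (\<forall>e\<in>E. \<exists>u v. e = {u, v} \<and> u \<noteq> v \<and> u \<in> V \<and> v \<in> V)"

definition graph_hom :: "'a set \<Rightarrow> 'a set set \<Rightarrow> 'b set \<Rightarrow> 'b set set \<Rightarrow> ('a \<Rightarrow> 'b) \<Rightarrow> bool" where
  "graph_hom V E V' E' f \<longleftrightarrow> (\<forall>v\<in>V. f v \<in> V') \<and> (\<forall>u v. {u, v} \<in> E \<longrightarrow> {f u, f v} \<in> E')"

definition subgraph :: "'a set \<Rightarrow> 'a set set \<Rightarrow> 'a set \<Rightarrow> 'a set set \<Rightarrow> bool" where
  "subgraph V' E' V E \<longleftrightarrow> graph V' E' \<and> V' \<subseteq> V \<and> E' \<subseteq> E"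

definition graph_iso :: "'a set \<Rightarrow> 'a set set \<Rightarrow> 'b set \<Rightarrow> 'b set set \<Rightarrow> ('a \<Rightarrow> 'b) \<Rightarrow> bool" where
  "graph_iso V E V' E' f \<longleftrightarrow> bij_betw f V V' \<and> (\<forall>u\<in>V. \<forall>v\<in>V. {u, v} \<in> E \<longleftrightarrow> {f u, f v} \<in> E')"

definition isomorphic :: "'a set \<Rightarrow> 'a set set \<Rightarrow> 'b set \<Rightarrow> 'b set set \<Rightarrow> bool" where
  "isomorphic V E V' E' \<longleftrightarrow> (\<exists>f. graph_iso V E V' E' f)"

definition is_core :: "'a set \<Rightarrow> 'a set set \<Rightarrow> 'a set \<Rightarrow> 'a set set \<Rightarrow> bool" where
  "is_core K EK V E \<longleftrightarrow> subgraph K EK V E \<and> (\<exists>f. graph_hom V E K EK f) \<and>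
     \<not> (\<exists>K' EK' f. subgraph K' EK' K EK \<and> (K', EK') \<noteq> (K, EK) \<and> graph_hom V E K' EK' f)"

definition core_iso_to :: "'a set \<Rightarrow> 'a set set \<Rightarrow> 'c set \<Rightarrow> 'c set set \<Rightarrow> bool" where
  "core_iso_to V E VC EC \<longleftrightarrow> (\<exists>K EK. is_core K EK V E \<and> isomorphic K EK VC EC)"

definition is_copy :: "'c set \<Rightarrow> 'c set set \<Rightarrow> 'a set \<Rightarrow> 'a set set \<Rightarrow> 'a set \<Rightarrow> 'a set set \<Rightarrow> bool" where
  "is_copy VC EC V E S ES \<longleftrightarrow> subgraph S ES V E \<and> isomorphic S ES VC EC"

definition C_coloring :: "'c set \<Rightarrow> 'c set set \<Rightarrow> 'a set \<Rightarrow> 'a set set \<Rightarrow> ('a \<Rightarrow> nat) \<Rightarrow> bool" where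
  "C_coloring VC EC V E f \<longleftrightarrow> (\<forall>v\<in>V. f v \<in> {1..card VC}) \<and>
     (\<forall>S ES. is_copy VC EC V E S ES \<longrightarrow> inj_on f S)"

definition C_colorable :: "'c set \<Rightarrow> 'c set set \<Rightarrow> 'a set \<Rightarrow> 'a set set \<Rightarrow> bool" where
  "C_colorable VC EC V E \<longleftrightarrow> (\<exists>f. C_coloring VC EC V E f)"

definition induced_edges :: "'a set set \<Rightarrow> 'a set \<Rightarrow> 'a set set" where
  "induced_edges E X = {e \<in> E. e \<subseteq> X}"

definition C_covering :: "'c set \<Rightarrow> 'c set set \<Rightarrow> 'a set \<Rightarrow> 'a set set \<Rightarrow> 'a set list \<Rightarrow> bool" where
  "C_covering VC EC V E Cs \<longleftrightarrow>
     (\<forall>X\<in>set Cs. X \<subseteq> V \<and> C_colorable VC EC X (induced_edges E X)) \<and>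
     (\<forall>S ES. is_copy VC EC V E S ES \<longrightarrow>
        (\<exists>X\<in>set Cs. subgraph S ES X (induced_edges E X)))"

definition C_covering_number :: "'c set \<Rightarrow> 'c set set \<Rightarrow> 'a set \<Rightarrow> 'a set set \<Rightarrow> nat" where
  "C_covering_number VC EC V E = (LEAST r. \<exists>Cs. length Cs = r \<and> C_covering VC EC V E Cs)"

end

theory Submission
  imports Defs
begin

text \<open>Let \<open>f : H\<^sub>1 \<rightarrow> H\<^sub>2\<close> be a homomorphism. Every endomorphism of a core is injective, and
a copy of \<open>C\<close> is isomorphic to the core of \<open>H\<^sub>2\<close>; hence \<open>f\<close> is injective on every copy of \<open>C\<close>
in \<open>H\<^sub>1\<close> and maps it onto a copy of \<open>C\<close> in \<open>H\<^sub>2\<close>. Pulling back an optimal \<open>C\<close>-covering of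
\<open>H\<^sub>2\<close> along \<open>f\<close> (together with its colorings, composed with \<open>f\<close>) then yields a \<open>C\<close>-covering
of \<open>H\<^sub>1\<close> of the same size.\<close>

lemma graph_edgeD:
  assumes "graph V E" "{u, v} \<in> E"
  shows "u \<in> V" "v \<in> V" "u \<noteq> v"
proof -
  obtain a b where "{u, v} = {a, b}" "a \<noteq> b" "a \<in> V" "b \<in> V"
    using assms unfolding graph_def by blast
  then show "u \<in> V" "v \<in> V" "u \<noteq> v" by (auto simp: doubleton_eq_iff)
qed

lemma graph_edge_subset:
  assumes "graph V E" "e \<in> E" shows "e \<subseteq> V"
proof -
  obtain u v where "e = {u, v}" "u \<in> V" "v \<in> V" using assms unfolding graph_def by blast
  then show ?thesis by simp
qed

lemma graph_induced_edges:
  assumes "graph V E" "X \<subseteq> V" shows "graph X (induced_edges E X)"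
  unfolding graph_def
proof (intro conjI ballI)
  show "finite X" using assms finite_subset unfolding graph_def by blast
  fix e assume "e \<in> induced_edges E X"
  then have "e \<in> E" "e \<subseteq> X" unfolding induced_edges_def by auto
  then obtain u v where "e = {u, v}" "u \<noteq> v" using assms(1) unfolding graph_def by blast
  then show "\<exists>u v. e = {u, v} \<and> u \<noteq> v \<and> u \<in> X \<and> v \<in> X" using \<open>e \<subseteq> X\<close> by blast
qed

lemma graph_hom_comp:
  "graph_hom V1 E1 V2 E2 f \<Longrightarrow> graph_hom V2 E2 V3 E3 g \<Longrightarrow> graph_hom V1 E1 V3 E3 (g \<circ> f)"
  unfolding graph_hom_def by auto

lemma graph_hom_subgraph:
  "subgraph S ES V E \<Longrightarrow> graph_hom V E V' E' f \<Longrightarrow> graph_hom S ES V' E' f"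
  unfolding subgraph_def graph_hom_def by blast

lemma graph_hom_onto_image: "graph_hom V E (f ` V) ((`) f ` E) f"
  unfolding graph_hom_def by (auto intro: image_eqI[where x = "{_, _}"])

lemma graph_image_subgraph:
  assumes "graph V E" "graph V' E'" "graph_hom V E V' E' f"
  shows "subgraph (f ` V) ((`) f ` E) V' E'"
  unfolding subgraph_def graph_def
proof (intro conjI ballI)
  show "finite (f ` V)" using assms(1) unfolding graph_def by blast
  show "f ` V \<subseteq> V'" using assms(3) unfolding graph_hom_def by blast
next
  fix e assume "e \<in> (`) f ` E"
  then obtain u v where e: "e = {f u, f v}" "{u, v} \<in> E"
    using assms(1) unfolding graph_def by auto
  then have "{f u, f v} \<in> E'" using assms(3) unfolding graph_hom_def by blast
  then show "\<exists>a b. e = {a, b} \<and> a \<noteq> b \<and> a \<in> f ` V \<and> b \<in> f ` V"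
    using e graph_edgeD[OF assms(1) e(2)] graph_edgeD(3)[OF assms(2)] by blast
next
  show "(`) f ` E \<subseteq> E'"
    using assms(1,3) unfolding graph_def graph_hom_def by auto
qed

lemma graph_iso_imp_graph_hom:
  assumes "graph V E" "graph_iso V E V' E' f"
  shows "graph_hom V E V' E' f"
  using assms graph_edgeD unfolding graph_iso_def graph_hom_def by (metis bij_betwE)

lemma graph_iso_comp:
  assumes "graph_iso V1 E1 V2 E2 f" "graph_iso V2 E2 V3 E3 g"
  shows "graph_iso V1 E1 V3 E3 (g \<circ> f)"
proof -
  have bij: "bij_betw f V1 V2" using assms(1) unfolding graph_iso_def by blast
  have "{u, v} \<in> E1 \<longleftrightarrow> {g (f u), g (f v)} \<in> E3" if "u \<in> V1" "v \<in> V1" for u v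
    using assms that bij_betwE[OF bij] unfolding graph_iso_def by blast
  moreover have "bij_betw (g \<circ> f) V1 V3"
    using assms bij_betw_trans unfolding graph_iso_def by blast
  ultimately show ?thesis unfolding graph_iso_def by simp
qed

lemma graph_iso_inv_into:
  assumes "graph_iso V E V' E' f"
  shows "graph_iso V' E' V E (inv_into V f)"
proof -
  have bij: "bij_betw f V V'" using assms unfolding graph_iso_def by blast
  have "{inv_into V f u, inv_into V f v} \<in> E \<longleftrightarrow> {u, v} \<in> E'" if "u \<in> V'" "v \<in> V'" for u v
    using assms that bij_betw_inv_into_right[OF bij] bij_betwE[OF bij_betw_inv_into[OF bij]]
    unfolding graph_iso_def by metis
  then show ?thesis using bij_betw_inv_into[OF bij] unfolding graph_iso_def by blast
qed

lemma isomorphic_sym: "isomorphic V E V' E' \<Longrightarrow> isomorphic V' E' V E"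
  unfolding isomorphic_def using graph_iso_inv_into by blast

lemma isomorphic_trans:
  "isomorphic V1 E1 V2 E2 \<Longrightarrow> isomorphic V2 E2 V3 E3 \<Longrightarrow> isomorphic V1 E1 V3 E3"
  unfolding isomorphic_def using graph_iso_comp by blast

lemma isomorphic_card: "isomorphic V E V' E' \<Longrightarrow> card V = card V'"
  unfolding isomorphic_def graph_iso_def using bij_betw_same_card by blast

lemma graph_iso_image:
  assumes "graph V E" "inj_on f V"
  shows "graph_iso V E (f ` V) ((`) f ` E) f"
  unfolding graph_iso_def
proof (intro conjI ballI)
  show "bij_betw f V (f ` V)" using assms(2) by (simp add: bij_betw_def)
next
  fix u v assume "u \<in> V" "v \<in> V"
  moreover have "E \<subseteq> Pow V" using graph_edge_subset[OF assms(1)] by blast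
  ultimately show "{u, v} \<in> E \<longleftrightarrow> {f u, f v} \<in> (`) f ` E"
    using inj_on_image_mem_iff[OF inj_on_image_Pow[OF assms(2)], of "{u, v}" E] by simp
qed

text \<open>If an endomorphism \<open>h\<close> of the core \<open>K\<close> were not injective, \<open>h \<circ> r\<close> (with \<open>r\<close> the
retraction onto \<open>K\<close>) would map the whole graph onto the proper subgraph \<open>h(K)\<close>.\<close>

lemma core_endomorphism_inj:
  assumes core: "is_core K EK V E" and h: "graph_hom K EK K EK h"
  shows "inj_on h K"
proof (rule ccontr)
  assume not_inj: "\<not> inj_on h K"
  obtain r where r: "graph_hom V E K EK r" using core unfolding is_core_def by blast
  have gK: "graph K EK" using core unfolding is_core_def subgraph_def by blast
  then have "finite K" unfolding graph_def by blast
  then have "h ` K \<noteq> K" using not_inj eq_card_imp_inj_on by metis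
  moreover have "subgraph (h ` K) ((`) h ` EK) K EK" using graph_image_subgraph[OF gK gK h] .
  moreover have "graph_hom V E (h ` K) ((`) h ` EK) (h \<circ> r)"
    using graph_hom_comp[OF r graph_hom_onto_image] .
  ultimately show False using core unfolding is_core_def by blast
qed

lemma graph_hom_inj_on_copy_of_core:
  assumes core: "core_iso_to V E VC EC" and iso: "isomorphic S ES VC EC"
    and f: "graph_hom S ES V E f"
  shows "inj_on f S"
proof -
  obtain K EK where K: "is_core K EK V E" "isomorphic K EK VC EC"
    using core unfolding core_iso_to_def by blast
  obtain r where r: "graph_hom V E K EK r" using K(1) unfolding is_core_def by blast
  have gK: "graph K EK" using K(1) unfolding is_core_def subgraph_def by blast
  obtain \<beta> where \<beta>: "graph_iso K EK S ES \<beta>"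
    using isomorphic_trans[OF K(2) isomorphic_sym[OF iso]] unfolding isomorphic_def by blast
  have "graph_hom K EK K EK (r \<circ> f \<circ> \<beta>)"
    using graph_hom_comp[OF graph_iso_imp_graph_hom[OF gK \<beta>] graph_hom_comp[OF f r]]
    by (simp add: comp_assoc)
  then have "inj_on (r \<circ> f) (\<beta> ` K)"
    using core_endomorphism_inj[OF K(1)] inj_on_imageI by blast
  moreover have "\<beta> ` K = S" using \<beta> unfolding graph_iso_def bij_betw_def by blast
  ultimately show ?thesis using inj_on_imageI2 by blast
qed

lemma is_copy_image:
  assumes "graph V' E'" "graph_hom V E V' E' f" "is_copy VC EC V E S ES" "inj_on f S"
  shows "is_copy VC EC V' E' (f ` S) ((`) f ` ES)"
proof -
  have sub: "subgraph S ES V E" and iso: "isomorphic S ES VC EC"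
    using assms(3) unfolding is_copy_def by auto
  have gS: "graph S ES" using sub unfolding subgraph_def by blast
  have "subgraph (f ` S) ((`) f ` ES) V' E'"
    using graph_image_subgraph[OF gS assms(1) graph_hom_subgraph[OF sub assms(2)]] .
  moreover have "isomorphic (f ` S) ((`) f ` ES) VC EC"
    using graph_iso_image[OF gS assms(4)] iso isomorphic_sym isomorphic_trans
    unfolding isomorphic_def by blast
  ultimately show ?thesis unfolding is_copy_def by blast
qed

lemma C_coloring_comp:
  assumes "graph V' E'" "graph_hom V E V' E' f" "C_coloring VC EC V' E' c"
    and inj: "\<And>S ES. is_copy VC EC V E S ES \<Longrightarrow> inj_on f S"
  shows "C_coloring VC EC V E (c \<circ> f)"
  unfolding C_coloring_def
proof (intro conjI ballI allI impI)
  fix v assume "v \<in> V"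
  then show "(c \<circ> f) v \<in> {1..card VC}"
    using assms(2,3) unfolding graph_hom_def C_coloring_def by simp
next
  fix S ES assume copy: "is_copy VC EC V E S ES"
  have "is_copy VC EC V' E' (f ` S) ((`) f ` ES)"
    using is_copy_image[OF assms(1,2) copy inj[OF copy]] .
  then have "inj_on c (f ` S)" using assms(3) unfolding C_coloring_def by blast
  then show "inj_on (c \<circ> f) S" using comp_inj_on inj[OF copy] by blast
qed

lemma graph_hom_induced_edges:
  assumes "graph_hom V E V' E' f" "Y \<subseteq> V" "f ` Y \<subseteq> X"
  shows "graph_hom Y (induced_edges E Y) X (induced_edges E' X) f"
  using assms unfolding graph_hom_def induced_edges_def by auto

lemma is_copy_induced_edges:
  "Y \<subseteq> V \<Longrightarrow> is_copy VC EC Y (induced_edges E Y) S ES \<Longrightarrow> is_copy VC EC V E S ES"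
  unfolding is_copy_def subgraph_def induced_edges_def by blast

lemma subgraph_induced_edges:
  assumes "subgraph S ES V E" "S \<subseteq> Y"
  shows "subgraph S ES Y (induced_edges E Y)"
  using assms graph_edge_subset unfolding subgraph_def induced_edges_def by blast

text \<open>A vertex set of size \<open>|C|\<close> contains no copy of \<open>C\<close> other than (possibly) itself,
so any bijection onto the colors is a \<open>C\<close>-coloring.\<close>

lemma C_colorable_card_eq:
  assumes "finite X" "card X = card VC"
  shows "C_colorable VC EC X E"
proof -
  obtain c where c: "bij_betw c X {1..card VC}"
    using assms bij_betw_iff_card[of X "{1..card VC}"] by auto
  have "C_coloring VC EC X E c"
    unfolding C_coloring_def
  proof (intro conjI ballI allI impI)
    fix v assume "v \<in> X" then show "c v \<in> {1..card VC}" using c bij_betwE by blast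
  next
    fix S ES assume copy: "is_copy VC EC X E S ES"
    have "S \<subseteq> X" using copy unfolding is_copy_def subgraph_def by blast
    moreover have "card S = card VC" using copy isomorphic_card unfolding is_copy_def by blast
    ultimately have "S = X" using card_subset_eq[OF assms(1)] assms(2) by simp
    then show "inj_on c S" using c by (simp add: bij_betw_def)
  qed
  then show ?thesis unfolding C_colorable_def by blast
qed

lemma C_covering_exists:
  assumes "graph V E"
  shows "\<exists>Cs. C_covering VC EC V E Cs"
proof -
  define copies where "copies = {S. \<exists>ES. is_copy VC EC V E S ES}"
  have "copies \<subseteq> Pow V" unfolding copies_def is_copy_def subgraph_def by blast
  then have "finite copies" using assms unfolding graph_def by (meson finite_Pow_iff finite_subset)
  then obtain Cs where Cs: "set Cs = copies" using finite_list by blast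
  have "C_covering VC EC V E Cs"
    unfolding C_covering_def
  proof (intro conjI ballI allI impI)
    fix X assume "X \<in> set Cs"
    then obtain ES where copy: "is_copy VC EC V E X ES" using Cs copies_def by blast
    then show "X \<subseteq> V" unfolding is_copy_def subgraph_def by blast
    have "finite X" using copy unfolding is_copy_def subgraph_def graph_def by blast
    moreover have "card X = card VC" using copy isomorphic_card unfolding is_copy_def by blast
    ultimately show "C_colorable VC EC X (induced_edges E X)" by (rule C_colorable_card_eq)
  next
    fix S ES assume copy: "is_copy VC EC V E S ES"
    then have "S \<in> set Cs" using Cs copies_def by blast
    moreover have "subgraph S ES S (induced_edges E S)"
      using copy subgraph_induced_edges unfolding is_copy_def by blast
    ultimately show "\<exists>X\<in>set Cs. subgraph S ES X (induced_edges E X)" by blast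
  qed
  then show ?thesis by blast
qed

lemma C_covering_number_attained:
  assumes "graph V E"
  shows "\<exists>Cs. length Cs = C_covering_number VC EC V E \<and> C_covering VC EC V E Cs"
proof -
  have "\<exists>r Cs. length Cs = r \<and> C_covering VC EC V E Cs"
    using C_covering_exists[OF assms] by blast
  then show ?thesis unfolding C_covering_number_def by (rule LeastI_ex)
qed

lemma C_covering_number_le: "C_covering VC EC V E Cs \<Longrightarrow> C_covering_number VC EC V E \<le> length Cs"
  unfolding C_covering_number_def by (rule Least_le) blast

lemma C_covering_preimage:
  assumes "graph V' E'" and f: "graph_hom V E V' E' f"
    and inj: "\<And>S ES. is_copy VC EC V E S ES \<Longrightarrow> inj_on f S"
    and cover: "C_covering VC EC V' E' Cs"
  shows "C_covering VC EC V E (map (\<lambda>X. {v \<in> V. f v \<in> X}) Cs)"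
  unfolding C_covering_def
proof (intro conjI ballI allI impI)
  fix Y assume "Y \<in> set (map (\<lambda>X. {v \<in> V. f v \<in> X}) Cs)"
  then obtain X where X: "X \<in> set Cs" and Y: "Y = {v \<in> V. f v \<in> X}" by auto
  then show "Y \<subseteq> V" by blast
  have "X \<subseteq> V'" "C_colorable VC EC X (induced_edges E' X)"
    using cover X unfolding C_covering_def by auto
  then obtain c where c: "C_coloring VC EC X (induced_edges E' X) c"
    unfolding C_colorable_def by blast
  have "C_coloring VC EC Y (induced_edges E Y) (c \<circ> f)"
  proof (rule C_coloring_comp[OF _ _ c])
    show "graph X (induced_edges E' X)" using graph_induced_edges[OF assms(1) \<open>X \<subseteq> V'\<close>] .
    show "graph_hom Y (induced_edges E Y) X (induced_edges E' X) f"
      by (rule graph_hom_induced_edges[OF f]) (auto simp: Y)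
    show "inj_on f S" if "is_copy VC EC Y (induced_edges E Y) S ES" for S ES
      by (rule inj, rule is_copy_induced_edges[OF _ that]) (auto simp: Y)
  qed
  then show "C_colorable VC EC Y (induced_edges E Y)" unfolding C_colorable_def by blast
next
  fix S ES assume copy: "is_copy VC EC V E S ES"
  have "is_copy VC EC V' E' (f ` S) ((`) f ` ES)"
    using is_copy_image[OF assms(1) f copy inj[OF copy]] .
  then obtain X where X: "X \<in> set Cs" "subgraph (f ` S) ((`) f ` ES) X (induced_edges E' X)"
    using cover unfolding C_covering_def by blast
  have sub: "subgraph S ES V E" using copy unfolding is_copy_def by blast
  have "f ` S \<subseteq> X" using X(2) unfolding subgraph_def by blast
  then have "S \<subseteq> {v \<in> V. f v \<in> X}" using sub unfolding subgraph_def by blast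
  then have "subgraph S ES {v \<in> V. f v \<in> X} (induced_edges E {v \<in> V. f v \<in> X})"
    by (rule subgraph_induced_edges[OF sub])
  moreover have "{v \<in> V. f v \<in> X} \<in> set (map (\<lambda>X. {v \<in> V. f v \<in> X}) Cs)"
    using X(1) by simp
  ultimately show "\<exists>Y\<in>set (map (\<lambda>X. {v \<in> V. f v \<in> X}) Cs). subgraph S ES Y (induced_edges E Y)"
    by blast
qed

theorem lemma13:
  fixes V1 :: "'a set" and E1 :: "'a set set"
    and V2 :: "'b set" and E2 :: "'b set set"
    and VC :: "'c set" and EC :: "'c set set"
  assumes "graph V1 E1" and "graph V2 E2" and "graph VC EC"
    and "core_iso_to V1 E1 VC EC" and "core_iso_to V2 E2 VC EC"
    and "\<exists>f. graph_hom V1 E1 V2 E2 f"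
  shows "C_covering_number VC EC V1 E1 \<le> C_covering_number VC EC V2 E2"
proof -
  obtain f where f: "graph_hom V1 E1 V2 E2 f" using assms(6) by blast
  have inj: "inj_on f S" if "is_copy VC EC V1 E1 S ES" for S ES
    using that graph_hom_inj_on_copy_of_core[OF assms(5)] graph_hom_subgraph[OF _ f]
    unfolding is_copy_def by blast
  obtain Cs where Cs: "length Cs = C_covering_number VC EC V2 E2" "C_covering VC EC V2 E2 Cs"
    using C_covering_number_attained[OF assms(2)] by blast
  have "C_covering VC EC V1 E1 (map (\<lambda>X. {v \<in> V1. f v \<in> X}) Cs)"
    by (rule C_covering_preimage[OF assms(2) f _ Cs(2)]) (erule inj)
  then show ?thesis using C_covering_number_le Cs(1) by fastforce
qed

end
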